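(* Let $d=p$ be any prime with $p\equiv 3\pmod 4$, let $x_0=-2-\sqrt{d+1}$ (with $\sqrt{d+1}>0$), and let $\sqrt{x_0}$ be a purely imaginary square root of $x_0$. Then there exists $x_1\in\mathbb{C}$ with $|x_1|=1$ such that the vector $|\mathbf v\rangle\in\mathbb{C}^d$ with components $v_0=\sqrt{x_0}$, $v_j=x_1$ for $j$ a nonzero quadratic residue mod $d$, and $v_j=-1/x_1$ for $j$ a quadratic nonresidue mod $d$, satisfies $$\langle\mathbf v|X^{-2j}|\mathbf v\rangle=(\sqrt{d+1}+1)\,v_j^2\qquad\text{for all } j\not\equiv 0\pmod d,$$ where $X$ is the cyclic shift $X|r\rangle=|r+1\rangle$, so that $\langle\mathbf v|X^{-2j}|\mathbf v\rangle=\sum_{k=0}^{d-1}v_k^*v_{k+2j}$.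
   Context: Indices are taken modulo $d$ and $^*$ denotes complex conjugation. Such a vector is called a Legendre vector; the displayed identity is called the $X$-overlap equation. *)

theory Defs
  imports "HOL-Analysis.Analysis" "HOL-Number_Theory.Number_Theory"
begin

definition legendre_vec :: "int \<Rightarrow> complex \<Rightarrow> complex \<Rightarrow> int \<Rightarrow> complex" where
  "legendre_vec d s x1 k =
     (if d dvd k then s else if QuadRes d k then x1 else - 1 / x1)"

definition overlap :: "int \<Rightarrow> (int \<Rightarrow> complex) \<Rightarrow> int \<Rightarrow> complex" where
  "overlap d v m = (\<Sum>k=0..<d. cnj (v k) * v (k + m))"

end

theory Submission
  imports Defs
begin

text \<open>Write \<open>x\<^sub>1 = a + i b\<close> with \<open>a\<^sup>2 + b\<^sup>2 = 1\<close>, so that \<open>-1/x\<^sub>1 = -a + i b\<close> and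
  \<open>v\<^sub>k = i b + a \<chi>(k) + (s - i b) [p | k]\<close>, where \<open>\<chi>\<close> is the Legendre symbol mod \<open>p\<close>.
  As \<open>-1\<close> is a nonresidue, \<open>\<chi>\<close> sums to zero over a period, and a dilation argument shows that
  its autocorrelation is \<open>-1\<close> at every nonzero shift. Hence for \<open>p \<nmid> m\<close> the overlap at shift \<open>m\<close>
  is \<open>p b\<^sup>2 - a\<^sup>2 + (s - i b) conj(i b - a \<chi>(m)) + conj(s - i b) (i b + a \<chi>(m))\<close>.
  With \<open>m = 2j\<close>, \<open>\<chi>(2j) = \<chi>(2) \<chi>(j)\<close>, \<open>s = i \<sigma>\<close> and \<open>t = \<surd>(p+1)\<close>, the overlap equation splits into
  one real and one imaginary equation in \<open>a, b\<close> that do not depend on \<open>j\<close>. The imaginary one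
  forces \<open>b = -\<chi>(2) \<sigma> / (t + 1 - \<chi>(2))\<close>; since \<open>\<sigma>\<^sup>2 = t + 2\<close>, this \<open>b\<close> satisfies \<open>b\<^sup>2 \<le> 1\<close> and
  the real equation as well.\<close>

lemma cong_abs_le_1_imp_eq:
  fixes u w n :: int
  assumes "[u = w] (mod n)" "n > 2" "\<bar>u\<bar> \<le> 1" "\<bar>w\<bar> \<le> 1"
  shows "u = w"
proof (rule ccontr)
  assume "u \<noteq> w"
  moreover have "n dvd u - w"
    using assms(1) by (simp add: cong_iff_dvd_diff)
  ultimately have "\<bar>n\<bar> \<le> \<bar>u - w\<bar>"
    by (intro dvd_imp_le_int) auto
  with assms(2-4) show False
    by linarith
qed

lemma Legendre_cong:
  assumes "[a = b] (mod p)"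
  shows "Legendre a p = Legendre b p"
proof -
  have "[a = 0] (mod p) \<longleftrightarrow> [b = 0] (mod p)" "QuadRes p a \<longleftrightarrow> QuadRes p b"
    using assms unfolding QuadRes_def by (meson cong_sym cong_trans)+
  then show ?thesis
    by (simp add: Legendre_def)
qed

lemma Legendre_mod [simp]: "Legendre (a mod p) p = Legendre a p"
  by (rule Legendre_cong) (simp add: cong_def)

lemma Legendre_abs_le_1: "\<bar>Legendre a p\<bar> \<le> 1"
  by (simp add: Legendre_def)

lemma Legendre_eq_1_or_minus_1: "\<not> p dvd a \<Longrightarrow> Legendre a p = 1 \<or> Legendre a p = -1"
  by (auto simp: Legendre_def cong_0_iff)

lemma Legendre_mult:
  assumes "prime p" "p > 2"
  shows "Legendre (a * b) (int p) = Legendre a (int p) * Legendre b (int p)"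
proof (rule cong_abs_le_1_imp_eq)
  have "[Legendre (a * b) (int p) = (a * b) ^ ((p - 1) div 2)] (mod int p)"
    by (rule euler_criterion[OF assms])
  moreover have "[Legendre a (int p) * Legendre b (int p)
                    = a ^ ((p - 1) div 2) * b ^ ((p - 1) div 2)] (mod int p)"
    by (intro cong_mult euler_criterion[OF assms])
  ultimately show "[Legendre (a * b) (int p) = Legendre a (int p) * Legendre b (int p)] (mod int p)"
    by (metis cong_sym cong_trans power_mult_distrib)
  show "\<bar>Legendre a (int p) * Legendre b (int p)\<bar> \<le> 1"
    by (simp add: abs_mult Legendre_abs_le_1 mult_le_one)
qed (use assms Legendre_abs_le_1 in auto)

lemma prime_mod_4_eq_3_gt_2:
  fixes p :: nat
  assumes "prime p" "p mod 4 = 3"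
  shows "p > 2"
  using assms prime_gt_1_nat[of p] by presburger

lemma Legendre_minus_one:
  assumes "prime p" "p mod 4 = 3"
  shows "Legendre (-1) (int p) = -1"
proof -
  have "p > 2"
    using assms by (rule prime_mod_4_eq_3_gt_2)
  moreover have "odd ((p - 1) div 2)"
    using assms by presburger
  ultimately have "[Legendre (-1) (int p) = -1] (mod int p)"
    using euler_criterion[OF assms(1), of "-1"] by simp
  then show ?thesis
    by (rule cong_abs_le_1_imp_eq) (use \<open>p > 2\<close> Legendre_abs_le_1 in auto)
qed

lemma Legendre_uminus:
  assumes "prime p" "p mod 4 = 3"
  shows "Legendre (- a) (int p) = - Legendre a (int p)"
  using Legendre_mult[OF assms(1) prime_mod_4_eq_3_gt_2[OF assms], of "-1" a]
  by (simp add: Legendre_minus_one[OF assms])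

lemma inj_on_add_mod: "inj_on (\<lambda>k. (k + m) mod n) {0..<n :: int}"
proof (rule inj_onI)
  fix k l assume "k \<in> {0..<n}" "l \<in> {0..<n}" "(k + m) mod n = (l + m) mod n"
  then show "k = l"
    using cong_add_rcancel[of k m l n] by (auto simp: cong_def)
qed

lemma inj_on_mult_mod:
  fixes c n :: int
  assumes "coprime c n"
  shows "inj_on (\<lambda>k. (c * k) mod n) {0..<n}"
proof (rule inj_onI)
  fix k l assume "k \<in> {0..<n}" "l \<in> {0..<n}" "(c * k) mod n = (c * l) mod n"
  then show "k = l"
    using cong_mult_lcancel[OF assms] by (auto simp: cong_def)
qed

lemma sum_periodic_reindex:
  fixes n :: int
  assumes "inj_on (\<lambda>k. g k mod n) {0..<n}" "\<And>x. f (x mod n) = f x"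
  shows "(\<Sum>k=0..<n. f (g k)) = (\<Sum>k=0..<n. f k)"
proof -
  have "(\<lambda>k. g k mod n) ` {0..<n} = {0..<n}"
    by (rule endo_inj_surj) (use assms(1) in auto)
  then have "(\<Sum>k=0..<n. f k) = (\<Sum>k=0..<n. f (g k mod n))"
    using sum.reindex[OF assms(1), of f] by (simp add: comp_def)
  then show ?thesis
    using assms(2) by simp
qed

lemma sum_periodic_shift:
  fixes n :: int
  assumes "\<And>x. f (x mod n) = f x"
  shows "(\<Sum>k=0..<n. f (k + m)) = (\<Sum>k=0..<n. f k)"
  by (rule sum_periodic_reindex[of "\<lambda>k. k + m"]) (simp_all add: inj_on_add_mod assms)

lemma sum_periodic_dilate:
  fixes n :: int
  assumes "coprime c n" "\<And>x. f (x mod n) = f x"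
  shows "(\<Sum>k=0..<n. f (c * k)) = (\<Sum>k=0..<n. f k)"
  by (rule sum_periodic_reindex[of "\<lambda>k. c * k"]) (simp_all add: inj_on_mult_mod assms)

lemma coprime_int_prime:
  assumes "prime p" "\<not> int p dvd c"
  shows "coprime c (int p)"
  using prime_imp_coprime[of "int p" c] assms by (simp add: coprime_commute)

lemma sum_Legendre_eq_0:
  assumes "prime p" "p mod 4 = 3"
  shows "(\<Sum>k=0..<int p. Legendre k (int p)) = 0"
proof -
  have "(\<Sum>k=0..<int p. Legendre k (int p)) = (\<Sum>k=0..<int p. Legendre (-1 * k) (int p))"
    by (rule sum_periodic_dilate[symmetric]) simp_all
  also have "\<dots> = - (\<Sum>k=0..<int p. Legendre k (int p))"
    by (simp add: Legendre_uminus[OF assms] sum_negf)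
  finally show ?thesis
    by simp
qed

definition Legendre_correlation :: "nat \<Rightarrow> int \<Rightarrow> int" where
  "Legendre_correlation p m = (\<Sum>k=0..<int p. Legendre k (int p) * Legendre (k + m) (int p))"

lemma Legendre_correlation_mod: "Legendre_correlation p (m mod int p) = Legendre_correlation p m"
proof -
  have "Legendre (k + m mod int p) (int p) = Legendre (k + m) (int p)" for k
    by (rule Legendre_cong) (simp add: cong_def mod_add_right_eq)
  then show ?thesis
    by (simp add: Legendre_correlation_def)
qed

lemma Legendre_correlation_dilate:
  assumes "prime p" "p > 2" "\<not> int p dvd c"
  shows "Legendre_correlation p (c * m) = Legendre_correlation p m"
proof -
  let ?f = "\<lambda>k. Legendre k (int p) * Legendre (k + c * m) (int p)"
  have "Legendre (x mod int p + c * m) (int p) = Legendre (x + c * m) (int p)" for x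
    by (rule Legendre_cong) (simp add: cong_def mod_add_left_eq)
  then have "Legendre_correlation p (c * m) = (\<Sum>k=0..<int p. ?f (c * k))"
    unfolding Legendre_correlation_def
    by (intro sum_periodic_dilate[symmetric]) (simp_all add: coprime_int_prime assms)
  moreover have "?f (c * k) = Legendre k (int p) * Legendre (k + m) (int p)" for k
  proof -
    have "Legendre c (int p) * Legendre c (int p) = 1"
      using Legendre_eq_1_or_minus_1[OF assms(3)] by auto
    then show ?thesis
      by (simp add: Legendre_mult[OF assms(1,2)] flip: distrib_left)
  qed
  ultimately show ?thesis
    by (simp add: Legendre_correlation_def)
qed

lemma Legendre_correlation_0:
  assumes "prime p"
  shows "Legendre_correlation p 0 = int p - 1"
proof -
  have "Legendre k (int p) * Legendre k (int p) = 1 - (if k = 0 then 1 else 0)"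
    if "k \<in> {0..<int p}" for k
  proof (cases "k = 0")
    case False
    with that have "\<not> int p dvd k"
      by (auto simp: zdvd_not_zless)
    with False show ?thesis
      using Legendre_eq_1_or_minus_1[of "int p" k] by auto
  qed (simp add: Legendre_def)
  then have "Legendre_correlation p 0 = (\<Sum>k=0..<int p. 1 - (if k = 0 then 1 else 0))"
    unfolding Legendre_correlation_def by (intro sum.cong) auto
  also have "\<dots> = int p - 1"
    using prime_gt_0_nat[OF assms] by (simp add: sum_subtractf)
  finally show ?thesis .
qed

lemma sum_Legendre_correlation_eq_0:
  assumes "prime p" "p mod 4 = 3"
  shows "(\<Sum>m=0..<int p. Legendre_correlation p m) = 0"
proof -
  have "(\<Sum>m=0..<int p. Legendre_correlation p m)
          = (\<Sum>k=0..<int p. Legendre k (int p) * (\<Sum>m=0..<int p. Legendre (m + k) (int p)))"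
    unfolding Legendre_correlation_def
    by (subst sum.swap) (simp add: sum_distrib_left add.commute)
  also have "\<dots> = 0"
    using sum_periodic_shift[of "\<lambda>m. Legendre m (int p)" "int p"] sum_Legendre_eq_0[OF assms]
    by simp
  finally show ?thesis .
qed

lemma Legendre_correlation_eq_minus_1:
  assumes "prime p" "p mod 4 = 3" "\<not> int p dvd m"
  shows "Legendre_correlation p m = -1"
proof -
  have "p > 2"
    using assms(1,2) by (rule prime_mod_4_eq_3_gt_2)
  have "Legendre_correlation p (m * a) = Legendre_correlation p m"
    if "a \<in> {0..<int p} - {0}" for a
    using that Legendre_correlation_dilate[OF assms(1) \<open>p > 2\<close>, of a m]
    by (auto simp: mult.commute zdvd_not_zless)
  then have "(\<Sum>a\<in>{0..<int p} - {0}. Legendre_correlation p (m * a))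
               = (\<Sum>a\<in>{0..<int p} - {0}. Legendre_correlation p m)"
    by (rule sum.cong[OF refl])
  then have rest: "(\<Sum>a\<in>{0..<int p} - {0}. Legendre_correlation p (m * a))
                     = (int p - 1) * Legendre_correlation p m"
    using \<open>p > 2\<close> by simp
  have "0 = (\<Sum>a=0..<int p. Legendre_correlation p a)"
    using sum_Legendre_correlation_eq_0[OF assms(1,2)] by simp
  also have "\<dots> = (\<Sum>a=0..<int p. Legendre_correlation p (m * a))"
    by (rule sum_periodic_dilate[symmetric])
      (simp_all add: coprime_int_prime assms Legendre_correlation_mod)
  also have "\<dots> = Legendre_correlation p 0
                    + (\<Sum>a\<in>{0..<int p} - {0}. Legendre_correlation p (m * a))"
    using \<open>p > 2\<close> by (subst sum.remove[of _ 0]) auto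
  also have "\<dots> = (int p - 1) * (1 + Legendre_correlation p m)"
    unfolding rest Legendre_correlation_0[OF assms(1)] by (simp add: algebra_simps)
  finally show ?thesis
    using \<open>p > 2\<close> by simp
qed

lemma sum_if_dvd_add:
  fixes n m :: int and g :: "int \<Rightarrow> 'a::comm_monoid_add"
  assumes "n > 0"
  shows "(\<Sum>k=0..<n. if n dvd k + m then g k else 0) = g ((- m) mod n)"
proof -
  have "n dvd k + m \<longleftrightarrow> k = (- m) mod n" if "k \<in> {0..<n}" for k
    using that mod_eq_dvd_iff[of k n "- m"] by auto
  then have "(\<Sum>k=0..<n. if n dvd k + m then g k else 0)
               = (\<Sum>k=0..<n. if k = (- m) mod n then g k else 0)"
    by (intro sum.cong) auto
  also have "\<dots> = g ((- m) mod n)"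
    using assms by (simp add: sum.delta')
  finally show ?thesis .
qed

lemma overlap_add_point_mass:
  fixes n m :: int and u :: "int \<Rightarrow> complex"
  assumes "n > 0" "\<not> n dvd m" "\<And>k. u (k mod n) = u k"
  shows "overlap n (\<lambda>k. u k + (if n dvd k then \<delta> else 0)) m
           = overlap n u m + \<delta> * cnj (u (- m)) + cnj \<delta> * u m"
proof -
  have "cnj (u k + (if n dvd k then \<delta> else 0)) * (u (k + m) + (if n dvd k + m then \<delta> else 0))
          = cnj (u k) * u (k + m) + (if n dvd k + m then \<delta> * cnj (u k) else 0)
              + (if n dvd k then cnj \<delta> * u (k + m) else 0)" for k
    using assms(2) by (auto simp: algebra_simps dvd_add_right_iff)
  then have "overlap n (\<lambda>k. u k + (if n dvd k then \<delta> else 0)) m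
               = overlap n u m + (\<Sum>k=0..<n. if n dvd k + m then \<delta> * cnj (u k) else 0)
                   + (\<Sum>k=0..<n. if n dvd k + 0 then cnj \<delta> * u (k + m) else 0)"
    unfolding overlap_def by (simp add: sum.distrib)
  also have "\<dots> = overlap n u m + \<delta> * cnj (u (- m)) + cnj \<delta> * u m"
    unfolding sum_if_dvd_add[OF assms(1)] by (simp add: assms(3))
  finally show ?thesis .
qed

lemma overlap_affine_Legendre:
  fixes \<alpha> :: complex and a :: real
  assumes "prime p" "p mod 4 = 3" "\<not> int p dvd m"
  shows "overlap (int p) (\<lambda>k. \<alpha> + of_real a * of_int (Legendre k (int p))) m
           = of_nat p * (cnj \<alpha> * \<alpha>) - of_real (a\<^sup>2)"
proof -
  let ?L = "\<lambda>k. complex_of_int (Legendre k (int p))"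
  have sum_L: "(\<Sum>k=0..<int p. ?L k) = 0"
    using arg_cong[where f = "of_int :: int \<Rightarrow> complex", OF sum_Legendre_eq_0[OF assms(1,2)]]
    by simp
  have sum_L_shift: "(\<Sum>k=0..<int p. ?L (k + m)) = 0"
    using sum_periodic_shift[of ?L "int p" m] sum_L by simp
  have corr: "(\<Sum>k=0..<int p. ?L k * ?L (k + m)) = -1"
    using arg_cong[where f = "of_int :: int \<Rightarrow> complex",
                   OF Legendre_correlation_eq_minus_1[OF assms]]
    by (simp add: Legendre_correlation_def)
  have "overlap (int p) (\<lambda>k. \<alpha> + of_real a * ?L k) m
          = (\<Sum>k=0..<int p. cnj \<alpha> * \<alpha> + (cnj \<alpha> * of_real a) * ?L (k + m)
                               + (of_real a * \<alpha>) * ?L k + of_real (a\<^sup>2) * (?L k * ?L (k + m)))"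
    unfolding overlap_def by (intro sum.cong) (simp_all add: algebra_simps power2_eq_square)
  also have "\<dots> = of_nat p * (cnj \<alpha> * \<alpha>) + (cnj \<alpha> * of_real a) * (\<Sum>k=0..<int p. ?L (k + m))
                    + (of_real a * \<alpha>) * (\<Sum>k=0..<int p. ?L k)
                    + of_real (a\<^sup>2) * (\<Sum>k=0..<int p. ?L k * ?L (k + m))"
    by (simp add: sum.distrib sum_distrib_left)
  finally show ?thesis
    by (simp add: sum_L sum_L_shift corr)
qed

lemma legendre_vec_unimodular:
  assumes "cmod x = 1"
  shows "legendre_vec d s x k
           = \<i> * of_real (Im x) + of_real (Re x) * of_int (Legendre k d)
               + (if d dvd k then s - \<i> * of_real (Im x) else 0)"
proof -
  have "x * cnj x = 1"
    using assms complex_norm_square[of x] by simp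
  then have "- 1 / x = - cnj x"
    by (simp add: divide_inverse inverse_unique)
  then show ?thesis
    unfolding legendre_vec_def Legendre_def cong_0_iff by (simp add: complex_eq_iff)
qed

lemma overlap_legendre_vec:
  fixes p :: nat and s x :: complex
  assumes "prime p" "p mod 4 = 3" "\<not> int p dvd m" "cmod x = 1"
  defines "\<alpha> \<equiv> \<i> * complex_of_real (Im x)"
  defines "\<beta> \<equiv> complex_of_real (Re x) * of_int (Legendre m (int p))"
  shows "overlap (int p) (legendre_vec (int p) s x) m
           = of_nat p * (cnj \<alpha> * \<alpha>) - of_real ((Re x)\<^sup>2)
               + (s - \<alpha>) * cnj (\<alpha> - \<beta>) + cnj (s - \<alpha>) * (\<alpha> + \<beta>)"
proof -
  define u where "u k = \<alpha> + of_real (Re x) * of_int (Legendre k (int p))" for k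
  have "legendre_vec (int p) s x = (\<lambda>k. u k + (if int p dvd k then s - \<alpha> else 0))"
    by (rule ext) (simp add: legendre_vec_unimodular[OF assms(4)] u_def \<alpha>_def)
  moreover have "u (- m) = \<alpha> - \<beta>" "u m = \<alpha> + \<beta>"
    by (simp_all add: u_def \<beta>_def Legendre_uminus[OF assms(1,2)])
  moreover have "overlap (int p) u m = of_nat p * (cnj \<alpha> * \<alpha>) - of_real ((Re x)\<^sup>2)"
    unfolding u_def by (rule overlap_affine_Legendre[OF assms(1-3)])
  moreover have "u (k mod int p) = u k" for k
    by (simp add: u_def)
  ultimately show ?thesis
    using overlap_add_point_mass[of "int p" m u "s - \<alpha>"] prime_gt_0_nat[OF assms(1)] assms(3)
    by simp
qed

lemma overlap_equation_parts_solvable: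
  fixes t \<sigma> :: real and \<eta> :: int and p :: nat
  assumes "t\<^sup>2 = real p + 1" "t \<ge> 2" "\<sigma>\<^sup>2 = t + 2" "\<eta> = 1 \<or> \<eta> = -1"
  obtains a b where "a\<^sup>2 + b\<^sup>2 = 1"
    and "real p * b\<^sup>2 - a\<^sup>2 + 2 * b * (\<sigma> - b) = (t + 1) * (a\<^sup>2 - b\<^sup>2)"
    and "- \<eta> * (\<sigma> - b) = (t + 1) * b"
proof -
  define D where "D = t + 1 - \<eta>"
  define b where "b = - \<eta> * \<sigma> / D"
  have \<eta>2: "(real_of_int \<eta>)\<^sup>2 = 1"
    using assms(4) by auto
  have "D \<ge> t"
    using assms(4) by (auto simp: D_def)
  then have "D > 0"
    using assms(2) by simp
  have b2: "b\<^sup>2 = (t + 2) / D\<^sup>2"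
    by (simp add: b_def power_divide power_mult_distrib assms(3) \<eta>2)
  have b\<sigma>: "b * \<sigma> = - \<eta> * (t + 2) / D"
    by (simp add: b_def power2_eq_square assms(3)[symmetric])
  have "2 * t \<le> t * t"
    using assms(2) by (intro mult_right_mono) auto
  then have "t + 2 \<le> t\<^sup>2"
    using assms(2) unfolding power2_eq_square by linarith
  also have "\<dots> \<le> D\<^sup>2"
    using \<open>D \<ge> t\<close> assms(2) by (intro power_mono) auto
  finally have "b\<^sup>2 \<le> 1"
    using \<open>D > 0\<close> by (simp add: b2 divide_le_eq_1)
  have p_eq: "real p = t\<^sup>2 - 1"
    using assms(1) by simp
  define a where "a = sqrt (1 - b\<^sup>2)"
  have a2: "a\<^sup>2 = 1 - b\<^sup>2"
    using \<open>b\<^sup>2 \<le> 1\<close> by (simp add: a_def)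
  have "D\<^sup>2 + 2 * real_of_int \<eta> * D = (t + 1)\<^sup>2 - (real_of_int \<eta>)\<^sup>2"
    unfolding D_def by (simp add: power2_eq_square algebra_simps)
  then have D_eq: "D\<^sup>2 + 2 * real_of_int \<eta> * D = t * (t + 2)"
    using \<eta>2 by (simp add: power2_eq_square algebra_simps)
  show ?thesis
  proof
    show "a\<^sup>2 + b\<^sup>2 = 1"
      by (simp add: a2)
    show "- \<eta> * (\<sigma> - b) = (t + 1) * b"
      using \<open>D > 0\<close> by (simp add: b_def D_def field_simps)
    have "real p * b\<^sup>2 - a\<^sup>2 + 2 * b * (\<sigma> - b) - (t + 1) * (a\<^sup>2 - b\<^sup>2)
            = t * (t + 2) * b\<^sup>2 + 2 * (b * \<sigma>) - (t + 2)"
      unfolding a2 p_eq by (simp add: algebra_simps power2_eq_square)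
    also have "\<dots> = (t + 2) / D\<^sup>2 * (t * (t + 2) - (D\<^sup>2 + 2 * real_of_int \<eta> * D))"
      unfolding b2 b\<sigma> using \<open>D > 0\<close> by (simp add: field_simps power2_eq_square)
    also have "\<dots> = 0"
      by (simp add: D_eq)
    finally show "real p * b\<^sup>2 - a\<^sup>2 + 2 * b * (\<sigma> - b) = (t + 1) * (a\<^sup>2 - b\<^sup>2)"
      by simp
  qed
qed

lemma legendre_vec_overlap_equation:
  fixes p :: nat and s x :: complex and t :: real
  assumes "prime p" "p mod 4 = 3" "\<not> int p dvd j" "cmod x = 1" "Re s = 0"
    and re: "real p * (Im x)\<^sup>2 - (Re x)\<^sup>2 + 2 * Im x * (Im s - Im x)
               = (t + 1) * ((Re x)\<^sup>2 - (Im x)\<^sup>2)"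
    and im: "- Legendre 2 (int p) * (Im s - Im x) = (t + 1) * Im x"
  shows "overlap (int p) (legendre_vec (int p) s x) (2 * j)
           = complex_of_real (t + 1) * (legendre_vec (int p) s x j)\<^sup>2"
proof -
  have "p > 2"
    using assms(1,2) by (rule prime_mod_4_eq_3_gt_2)
  then have "\<not> int p dvd 2 * j"
    using assms(1,3) prime_dvd_mult_iff[of "int p" 2 j] by (auto dest: zdvd_imp_le)
  define \<eta> where "\<eta> = Legendre 2 (int p)"
  define \<epsilon> where "\<epsilon> = Legendre j (int p)"
  define \<alpha> where "\<alpha> = \<i> * complex_of_real (Im x)"
  have \<eta>\<epsilon>: "\<eta> = 1 \<or> \<eta> = -1" "\<epsilon> = 1 \<or> \<epsilon> = -1"
    using \<open>p > 2\<close> assms(3) unfolding \<eta>_def \<epsilon>_def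
    by (auto intro!: Legendre_eq_1_or_minus_1 dest: zdvd_imp_le)
  have "Legendre (2 * j) (int p) = \<eta> * \<epsilon>"
    by (simp add: \<eta>_def \<epsilon>_def Legendre_mult[OF assms(1) \<open>p > 2\<close>])
  then have "overlap (int p) (legendre_vec (int p) s x) (2 * j)
               = of_nat p * (cnj \<alpha> * \<alpha>) - of_real ((Re x)\<^sup>2)
                   + (s - \<alpha>) * cnj (\<alpha> - of_real (Re x) * of_int (\<eta> * \<epsilon>))
                   + cnj (s - \<alpha>) * (\<alpha> + of_real (Re x) * of_int (\<eta> * \<epsilon>))"
    using overlap_legendre_vec[OF assms(1,2) \<open>\<not> int p dvd 2 * j\<close> assms(4)]
    by (simp add: \<alpha>_def)
  also have "\<dots> = complex_of_real (t + 1) * (\<alpha> + of_real (Re x) * of_int \<epsilon>)\<^sup>2"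
  proof -
    have "s = \<i> * of_real (Im s)"
      using assms(5) by (simp add: complex_eq_iff)
    moreover have "Re x * (- \<eta> * (Im s - Im x)) = Re x * ((t + 1) * Im x)"
      using im by (simp add: \<eta>_def)
    ultimately show ?thesis
      using re \<eta>\<epsilon> by (auto simp: \<alpha>_def complex_eq_iff power2_eq_square algebra_simps)
  qed
  also have "\<alpha> + of_real (Re x) * of_int \<epsilon> = legendre_vec (int p) s x j"
    using assms(3) by (simp add: legendre_vec_unimodular[OF assms(4)] \<alpha>_def \<epsilon>_def)
  finally show ?thesis .
qed

theorem proposition2:
  fixes p :: nat and s :: complex
  assumes "prime p" and "p mod 4 = 3"
    and "s\<^sup>2 = complex_of_real (- 2 - sqrt (real p + 1))"
    and "Re s = 0"
  shows "\<exists>x1::complex. cmod x1 = 1 \<and>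
           (\<forall>j::int. \<not> int p dvd j \<longrightarrow>
              overlap (int p) (legendre_vec (int p) s x1) (2 * j)
                = complex_of_real (sqrt (real p + 1) + 1) * (legendre_vec (int p) s x1 j)\<^sup>2)"
proof -
  have "p > 2"
    using assms(1,2) by (rule prime_mod_4_eq_3_gt_2)
  define t where "t = sqrt (real p + 1)"
  have t: "t\<^sup>2 = real p + 1" "t \<ge> 2"
    using \<open>p > 2\<close> real_le_rsqrt[of 2 "real p + 1"] by (simp_all add: t_def)
  have "(Im s)\<^sup>2 = t + 2"
    using arg_cong[OF assms(3), of Re] assms(4) by (simp add: t_def power2_eq_square)
  moreover have "Legendre 2 (int p) = 1 \<or> Legendre 2 (int p) = -1"
    using \<open>p > 2\<close> by (auto intro!: Legendre_eq_1_or_minus_1 dest: zdvd_imp_le)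
  ultimately obtain a b where "a\<^sup>2 + b\<^sup>2 = 1"
    and "real p * b\<^sup>2 - a\<^sup>2 + 2 * b * (Im s - b) = (t + 1) * (a\<^sup>2 - b\<^sup>2)"
    and "- Legendre 2 (int p) * (Im s - b) = (t + 1) * b"
    using overlap_equation_parts_solvable[OF t] by blast
  then show ?thesis
    using legendre_vec_overlap_equation[OF assms(1,2) _ _ assms(4), of _ "Complex a b" t]
    by (intro exI[of _ "Complex a b"]) (simp add: cmod_def t_def)
qed

end
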